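(* Let $A,B$ be an LR pair on $V$ with parameter sequence $(\varphi_i)_{i=1}^d$ and let $E_i$ ($0\le i\le d$) be the projection onto the $i$-th component of the $(A,B)$-decomposition. Define $$\Psi=\sum_{i=0}^d\frac{\varphi_1\varphi_2\cdots\varphi_i}{\varphi_d\varphi_{d-1}\cdots\varphi_{d-i+1}}E_i .$$ Then $\Psi$ is invertible, each of $A,\Psi^{-1}B\Psi$ and $\Psi A\Psi^{-1},B$ is an LR pair on $V$, and the three LR pairs $$A,\ \Psi^{-1}B\Psi\qquad\qquad B,\ A\qquad\qquad \Psi A\Psi^{-1},\ B$$ are mutually isomorphic.
   Context: Let $V$ be a vector space over a field $\mathbb F$ with $\dim V=d+1$. A decomposition of $V$ is a sequence $(V_i)_{i=0}^d$ of one-dimensional subspaces with $V=\bigoplus_{i=0}^d V_i$. An element $X\in\mathrm{End}(V)$ lowers the decomposition if $XV_i=V_{i-1}$ for $1\le i\le d$ and $XV_0=0$; it raises it if $XV_i=V_{i+1}$ for $0\le i\le d-1$ and $XV_d=0$. An ordered pair $A,B\in\mathrm{End}(V)$ is an LR pair on $V$ if some decomposition of $V$ is lowered by $A$ and raised by $B$; it is unique, the $(A,B)$-decomposition $(V_i)$. The projection $E_i$ maps $V_i$ identically and kills $V_j$ for $j\ne i$. For $1\le i\le d$, $V_i$ is invariant under $BA$ with nonzero eigenvalue $\varphi_i$ (the parameter sequence). LR pairs $A,B$ and $A',B'$ on $V$ are isomorphic if there is an invertible $\sigma\in\mathrm{End}(V)$ with $\sigma A=A'\sigma$, $\sigma B=B'\sigma$.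 *)

theory Defs
  imports "HOL.Vector_Spaces"
begin

definition is_decomposition ::
  "('a::field \<Rightarrow> 'v::ab_group_add \<Rightarrow> 'v) \<Rightarrow> nat \<Rightarrow> (nat \<Rightarrow> 'v set) \<Rightarrow> bool" where
  "is_decomposition scale d Vs \<longleftrightarrow>
     (\<forall>i\<le>d. module.subspace scale (Vs i) \<and> vector_space.dim scale (Vs i) = 1) \<and>
     (\<forall>v. \<exists>ws. (\<forall>j\<le>d. ws j \<in> Vs j) \<and> v = (\<Sum>j\<in>{0..d}. ws j)) \<and>
     (\<forall>ws. (\<forall>j\<le>d. ws j \<in> Vs j) \<and> (\<Sum>j\<in>{0..d}. ws j) = 0 \<longrightarrow> (\<forall>j\<le>d. ws j = 0))"

definition lowers :: "nat \<Rightarrow> ('v::zero \<Rightarrow> 'v) \<Rightarrow> (nat \<Rightarrow> 'v set) \<Rightarrow> bool" where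
  "lowers d X Vs \<longleftrightarrow> (\<forall>i\<in>{1..d}. X ` Vs i = Vs (i - 1)) \<and> X ` Vs 0 = {0}"

definition raises :: "nat \<Rightarrow> ('v::zero \<Rightarrow> 'v) \<Rightarrow> (nat \<Rightarrow> 'v set) \<Rightarrow> bool" where
  "raises d X Vs \<longleftrightarrow> (\<forall>i<d. X ` Vs i = Vs (i + 1)) \<and> X ` Vs d = {0}"

text \<open>LR pair on V, where dim V = d + 1 (forced by the decomposition).\<close>
definition LR_pair ::
  "('a::field \<Rightarrow> 'v::ab_group_add \<Rightarrow> 'v) \<Rightarrow> nat \<Rightarrow> ('v \<Rightarrow> 'v) \<Rightarrow> ('v \<Rightarrow> 'v) \<Rightarrow> bool" where
  "LR_pair scale d A B \<longleftrightarrow> Vector_Spaces.linear scale scale A \<and> Vector_Spaces.linear scale scale B \<and>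
     (\<exists>Vs. is_decomposition scale d Vs \<and> lowers d A Vs \<and> raises d B Vs)"

definition LR_iso ::
  "('a::field \<Rightarrow> 'v::ab_group_add \<Rightarrow> 'v) \<Rightarrow> nat \<Rightarrow> ('v \<Rightarrow> 'v) \<Rightarrow> ('v \<Rightarrow> 'v)
     \<Rightarrow> ('v \<Rightarrow> 'v) \<Rightarrow> ('v \<Rightarrow> 'v) \<Rightarrow> bool" where
  "LR_iso scale d A B A' B' \<longleftrightarrow> LR_pair scale d A B \<and> LR_pair scale d A' B' \<and>
     (\<exists>\<sigma>. Vector_Spaces.linear scale scale \<sigma> \<and> bij \<sigma> \<and> \<sigma> \<circ> A = A' \<circ> \<sigma> \<and> \<sigma> \<circ> B = B' \<circ> \<sigma>)"

definition proj :: "nat \<Rightarrow> (nat \<Rightarrow> 'v::comm_monoid_add set) \<Rightarrow> nat \<Rightarrow> 'v \<Rightarrow> 'v" where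
  "proj d Vs i v = (THE w. \<exists>ws. (\<forall>j\<le>d. ws j \<in> Vs j) \<and> v = (\<Sum>j\<in>{0..d}. ws j) \<and> w = ws i)"

end

theory Submission
  imports Defs
begin

(* Conjugating by a map \<Psi> that acts on the i-th component V_i as the scalar c_i keeps the
   decomposition and replaces the parameter sequence \<phi>_i by c_{i-1} \<phi>_i / c_i; for the
   c_i of the theorem this is \<phi>_{d-i+1}. The swapped pair B, A is an LR pair on the reversed
   decomposition with the same parameter sequence \<phi>_{d-i+1}. Finally, LR pairs with equal
   parameter sequences are isomorphic: each has a basis b_i \<in> V_i with B b_i = b_{i+1} and
   A b_i = \<phi>_i b_{i-1}, and the linear map sending one such basis to the other intertwines
   the two pairs. *)

definition psi_coeff :: "nat \<Rightarrow> (nat \<Rightarrow> 'a::field) \<Rightarrow> nat \<Rightarrow> 'a"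
  where "psi_coeff d \<phi> i = (\<Prod>j\<in>{1..i}. \<phi> j) / (\<Prod>j\<in>{1..i}. \<phi> (d + 1 - j))"

lemma psi_coeff_nonzero:
  assumes "\<forall>j\<in>{1..d}. \<phi> j \<noteq> 0" and "i \<le> d"
  shows "psi_coeff d \<phi> i \<noteq> 0"
proof -
  have "\<phi> j \<noteq> 0" "\<phi> (d + 1 - j) \<noteq> 0" if "j \<in> {1..i}" for j
  proof -
    have "j \<in> {1..d}" "d + 1 - j \<in> {1..d}" using that assms(2) by auto
    then show "\<phi> j \<noteq> 0" "\<phi> (d + 1 - j) \<noteq> 0" using assms(1) by blast+
  qed
  then show ?thesis unfolding psi_coeff_def by (simp add: prod_zero_iff)
qed

lemma psi_coeff_ratio:
  assumes \<phi>: "\<forall>j\<in>{1..d}. \<phi> j \<noteq> 0" and i: "i \<in> {1..d}"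
  shows "psi_coeff d \<phi> (i - 1) / psi_coeff d \<phi> i * \<phi> i = \<phi> (d + 1 - i)"
proof -
  obtain k where k: "i = Suc k" "k < d" using i by (cases i) auto
  have step: "psi_coeff d \<phi> (Suc k) = psi_coeff d \<phi> k * (\<phi> (Suc k) / \<phi> (d - k))"
    by (simp add: psi_coeff_def prod.nat_ivl_Suc')
  have "psi_coeff d \<phi> k \<noteq> 0" "\<phi> (Suc k) \<noteq> 0" "\<phi> (d - k) \<noteq> 0"
    using psi_coeff_nonzero[OF \<phi>, of k] \<phi> k by auto
  then show ?thesis unfolding k(1) step by (simp add: field_simps)
qed

context vector_space
begin

interpretation endo: vector_space_pair scale scale ..

lemma decomposition_subspace: "is_decomposition scale d Vs \<Longrightarrow> i \<le> d \<Longrightarrow> subspace (Vs i)"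
  by (simp add: is_decomposition_def)

lemma decomposition_dim: "is_decomposition scale d Vs \<Longrightarrow> i \<le> d \<Longrightarrow> dim (Vs i) = 1"
  by (simp add: is_decomposition_def)

lemma decomposition_sum_eq_0D:
  assumes "is_decomposition scale d Vs" "\<forall>j\<le>d. ws j \<in> Vs j" "(\<Sum>j\<in>{0..d}. ws j) = 0" "j \<le> d"
  shows "ws j = 0"
  using assms unfolding is_decomposition_def by blast

lemma proj_eqI:
  assumes D: "is_decomposition scale d Vs" and ws: "\<forall>j\<le>d. ws j \<in> Vs j"
    and v: "v = (\<Sum>j\<in>{0..d}. ws j)" and i: "i \<le> d"
  shows "proj d Vs i v = ws i"
  unfolding proj_def
proof (rule the_equality)
  show "\<exists>ws'. (\<forall>j\<le>d. ws' j \<in> Vs j) \<and> v = (\<Sum>j\<in>{0..d}. ws' j) \<and> ws i = ws' i"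
    using ws v by blast
next
  fix w assume "\<exists>ws'. (\<forall>j\<le>d. ws' j \<in> Vs j) \<and> v = (\<Sum>j\<in>{0..d}. ws' j) \<and> w = ws' i"
  then obtain ws' where ws': "\<forall>j\<le>d. ws' j \<in> Vs j" "v = (\<Sum>j\<in>{0..d}. ws' j)" "w = ws' i"
    by blast
  have diff_mem: "\<forall>j\<le>d. ws' j - ws j \<in> Vs j"
    using ws ws'(1) decomposition_subspace[OF D] subspace_diff by blast
  have diff_sum: "(\<Sum>j\<in>{0..d}. ws' j - ws j) = 0"
    using ws'(2) v by (simp add: sum_subtractf)
  have "ws' i - ws i = 0" by (rule decomposition_sum_eq_0D[OF D diff_mem diff_sum i])
  then show "w = ws i" using ws'(3) by simp
qed

lemma proj_mem_and_sum:
  assumes D: "is_decomposition scale d Vs"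
  shows "(\<forall>i\<le>d. proj d Vs i v \<in> Vs i) \<and> (\<Sum>j\<in>{0..d}. proj d Vs j v) = v"
proof -
  obtain ws where ws: "\<forall>j\<le>d. ws j \<in> Vs j" "v = (\<Sum>j\<in>{0..d}. ws j)"
    using D unfolding is_decomposition_def by blast
  then show ?thesis using proj_eqI[OF D ws] by auto
qed

lemma proj_mem: "is_decomposition scale d Vs \<Longrightarrow> i \<le> d \<Longrightarrow> proj d Vs i v \<in> Vs i"
  using proj_mem_and_sum by blast

lemma sum_proj: "is_decomposition scale d Vs \<Longrightarrow> (\<Sum>j\<in>{0..d}. proj d Vs j v) = v"
  using proj_mem_and_sum by blast

lemma proj_component:
  assumes D: "is_decomposition scale d Vs" and "w \<in> Vs i" "i \<le> d" "j \<le> d"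
  shows "proj d Vs j w = (if j = i then w else 0)"
  using proj_eqI[OF D, of "\<lambda>k. if k = i then w else 0"] assms
    decomposition_subspace[OF D] subspace_0 by (simp add: if_distrib cong: if_cong)

lemma linear_proj:
  assumes D: "is_decomposition scale d Vs" and i: "i \<le> d"
  shows "Vector_Spaces.linear scale scale (proj d Vs i)"
proof -
  have "proj d Vs i (u + v) = proj d Vs i u + proj d Vs i v" for u v
    using proj_eqI[OF D, of "\<lambda>k. proj d Vs k u + proj d Vs k v" "u + v" i] i
      decomposition_subspace[OF D] subspace_add proj_mem[OF D]
    by (simp add: sum.distrib sum_proj[OF D])
  moreover have "proj d Vs i (scale c u) = scale c (proj d Vs i u)" for c u
    using proj_eqI[OF D, of "\<lambda>k. scale c (proj d Vs k u)" "scale c u" i] i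
      decomposition_subspace[OF D] subspace_scale proj_mem[OF D]
    by (simp add: scale_sum_right[symmetric] sum_proj[OF D])
  ultimately show ?thesis by (simp add: linear_iff vector_space_axioms)
qed

lemma linear_eq_on_decomposition:
  assumes D: "is_decomposition scale d Vs"
    and "Vector_Spaces.linear scale scale f" "Vector_Spaces.linear scale scale g"
    and eq: "\<And>i w. i \<le> d \<Longrightarrow> w \<in> Vs i \<Longrightarrow> f w = g w"
  shows "f = g"
proof
  fix v
  have "f v = (\<Sum>j\<in>{0..d}. f (proj d Vs j v))"
    using endo.linear_sum[OF assms(2)] sum_proj[OF D] by metis
  also have "\<dots> = (\<Sum>j\<in>{0..d}. g (proj d Vs j v))"
    using eq proj_mem[OF D] by (intro sum.cong) auto
  also have "\<dots> = g v"
    using endo.linear_sum[OF assms(3)] sum_proj[OF D] by metis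
  finally show "f v = g v" .
qed

lemma is_decomposition_reverse:
  assumes D: "is_decomposition scale d Vs"
  shows "is_decomposition scale d (\<lambda>i. Vs (d - i))"
proof -
  have rev: "(\<Sum>j\<in>{0..d}. g (d - j)) = (\<Sum>j\<in>{0..d}. g j)" for g :: "nat \<Rightarrow> 'b"
    using sum.atLeastAtMost_rev[of g 0 d] by simp
  show ?thesis
    unfolding is_decomposition_def
  proof (intro conjI allI impI)
    fix i assume "i \<le> d"
    show "subspace (Vs (d - i))" "dim (Vs (d - i)) = 1"
      using D by (simp_all add: is_decomposition_def)
  next
    fix v
    obtain ws where ws: "\<forall>j\<le>d. ws j \<in> Vs j" "v = (\<Sum>j\<in>{0..d}. ws j)"
      using D unfolding is_decomposition_def by blast
    have "\<forall>j\<le>d. ws (d - j) \<in> Vs (d - j)" using ws(1) by simp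
    moreover have "v = (\<Sum>j\<in>{0..d}. ws (d - j))" using ws(2) rev[of ws] by simp
    ultimately show "\<exists>ws. (\<forall>j\<le>d. ws j \<in> Vs (d - j)) \<and> v = (\<Sum>j\<in>{0..d}. ws j)"
      by (intro exI[of _ "\<lambda>j. ws (d - j)"] conjI)
  next
    fix ws j assume ws: "(\<forall>j\<le>d. ws j \<in> Vs (d - j)) \<and> (\<Sum>j\<in>{0..d}. ws j) = 0" and j: "j \<le> d"
    have "\<forall>k\<le>d. ws (d - k) \<in> Vs k"
    proof (intro allI impI)
      fix k assume "k \<le> d"
      then have "d - (d - k) = k" by simp
      then show "ws (d - k) \<in> Vs k" using ws diff_le_self[of d k] by metis
    qed
    moreover have "(\<Sum>k\<in>{0..d}. ws (d - k)) = 0" using ws rev[of ws] by simp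
    ultimately have "ws (d - (d - j)) = 0"
      by (rule decomposition_sum_eq_0D[OF D]) simp
    then show "ws j = 0" using j by simp
  qed
qed

lemma decomposition_component_nonzero:
  assumes D: "is_decomposition scale d Vs" and i: "i \<le> d"
  obtains e where "e \<in> Vs i" "e \<noteq> 0"
proof -
  have "\<not> Vs i \<subseteq> span {}"
    using dim_le_card[of "Vs i" "{}"] decomposition_dim[OF D i] by auto
  then show ?thesis using that by auto
qed

lemma decomposition_component_multiple:
  assumes D: "is_decomposition scale d Vs" and i: "i \<le> d"
    and b: "b \<in> Vs i" "b \<noteq> 0" and w: "w \<in> Vs i"
  obtains t where "w = scale t b"
proof -
  obtain Bs where Bs: "Vs i \<subseteq> span Bs" "card Bs = dim (Vs i)"
    by (rule basis_exists[of "Vs i"])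
  then have "card Bs = 1" using decomposition_dim[OF D i] by simp
  then obtain e where "Bs = {e}" by (rule card_1_singletonE)
  then have line: "Vs i \<subseteq> range (\<lambda>k. scale k e)" using Bs(1) by (simp add: span_singleton)
  obtain s where s: "b = scale s e" using subsetD[OF line b(1)] by (rule rangeE)
  obtain r where r: "w = scale r e" using subsetD[OF line w] by (rule rangeE)
  have "s \<noteq> 0" using s b(2) by auto
  then have "w = scale (r / s) b" by (simp add: r s)
  then show ?thesis by (rule that)
qed

lemma scale_image_subspace:
  assumes "subspace S" "k \<noteq> 0"
  shows "scale k ` S = S"
proof
  show "scale k ` S \<subseteq> S" using assms(1) subspace_scale by blast
  show "S \<subseteq> scale k ` S"
  proof
    fix s assume "s \<in> S"
    then have "scale (inverse k) s \<in> S" using assms(1) subspace_scale by blast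
    moreover have "s = scale k (scale (inverse k) s)" using assms(2) by simp
    ultimately show "s \<in> scale k ` S" by blast
  qed
qed

lemma image_scaled_map:
  assumes S: "subspace S" and k: "k \<noteq> 0" and f: "\<forall>w\<in>T. f w = scale k (g w)" and g: "g ` T = S"
  shows "f ` T = S"
proof -
  have "f ` T = scale k ` g ` T" using f by (force simp: image_image)
  then show ?thesis using scale_image_subspace[OF S k] g by simp
qed

lemma component_map_nonzero:
  assumes D: "is_decomposition scale d Vs" and lin: "Vector_Spaces.linear scale scale X"
    and "i \<le> d" "j \<le> d" and img: "X ` Vs i = Vs j" and b: "b \<in> Vs i" "b \<noteq> 0"
  shows "X b \<noteq> 0"
proof
  assume Xb: "X b = 0"
  obtain u where u: "u \<in> Vs j" "u \<noteq> 0"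
    using decomposition_component_nonzero[OF D \<open>j \<le> d\<close>] .
  then obtain w where w: "w \<in> Vs i" "u = X w" using img by blast
  obtain t where "w = scale t b"
    using decomposition_component_multiple[OF D \<open>i \<le> d\<close> b w(1)] .
  then have "u = scale t (X b)" using w(2) endo.linear_scale[OF lin] by simp
  with Xb u(2) show False by simp
qed

definition is_component_basis :: "nat \<Rightarrow> (nat \<Rightarrow> 'b set) \<Rightarrow> (nat \<Rightarrow> 'b) \<Rightarrow> bool"
  where "is_component_basis d Vs b \<longleftrightarrow> (\<forall>i\<le>d. b i \<in> Vs i \<and> b i \<noteq> 0)"

lemma linear_eq_on_component_basis:
  assumes D: "is_decomposition scale d Vs" and b: "is_component_basis d Vs b"
    and f: "Vector_Spaces.linear scale scale f" and g: "Vector_Spaces.linear scale scale g"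
    and eq: "\<And>i. i \<le> d \<Longrightarrow> f (b i) = g (b i)"
  shows "f = g"
proof (rule linear_eq_on_decomposition[OF D f g])
  fix i w assume i: "i \<le> d" and w: "w \<in> Vs i"
  have "b i \<in> Vs i" "b i \<noteq> 0" using b i by (auto simp: is_component_basis_def)
  then obtain t where "w = scale t (b i)"
    using decomposition_component_multiple[OF D i _ _ w] by blast
  then show "f w = g w"
    using eq[OF i] endo.linear_scale[OF f] endo.linear_scale[OF g] by simp
qed

definition coord :: "nat \<Rightarrow> (nat \<Rightarrow> 'b set) \<Rightarrow> (nat \<Rightarrow> 'b) \<Rightarrow> nat \<Rightarrow> 'b \<Rightarrow> 'a"
  where "coord d Vs b i v = (THE t. proj d Vs i v = scale t (b i))"

lemma proj_eq_scale_coord: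
  assumes D: "is_decomposition scale d Vs" and b: "is_component_basis d Vs b" and i: "i \<le> d"
  shows "proj d Vs i v = scale (coord d Vs b i v) (b i)"
proof -
  have bi: "b i \<in> Vs i" "b i \<noteq> 0" using b i by (auto simp: is_component_basis_def)
  obtain t where t: "proj d Vs i v = scale t (b i)"
    using decomposition_component_multiple[OF D i bi proj_mem[OF D i]] .
  have "\<exists>!t. proj d Vs i v = scale t (b i)"
    using t bi(2) by auto
  then show ?thesis unfolding coord_def by (rule theI')
qed

lemma coord_eqI:
  assumes D: "is_decomposition scale d Vs" and b: "is_component_basis d Vs b" and i: "i \<le> d"
    and t: "proj d Vs i v = scale t (b i)"
  shows "coord d Vs b i v = t"
  using proj_eq_scale_coord[OF D b i, of v] t b i by (simp add: is_component_basis_def)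

definition basis_transport ::
    "nat \<Rightarrow> (nat \<Rightarrow> 'b set) \<Rightarrow> (nat \<Rightarrow> 'b) \<Rightarrow> (nat \<Rightarrow> 'b) \<Rightarrow> 'b \<Rightarrow> 'b"
  where "basis_transport d Vs b b' v = (\<Sum>i\<in>{0..d}. scale (coord d Vs b i v) (b' i))"

lemma linear_basis_transport:
  assumes D: "is_decomposition scale d Vs" and b: "is_component_basis d Vs b"
  shows "Vector_Spaces.linear scale scale (basis_transport d Vs b b')"
proof -
  have add: "coord d Vs b i (u + v) = coord d Vs b i u + coord d Vs b i v" if i: "i \<le> d" for i u v
    by (rule coord_eqI[OF D b i]) (simp only: endo.linear_add[OF linear_proj[OF D i]]
        proj_eq_scale_coord[OF D b i, of u] proj_eq_scale_coord[OF D b i, of v] scale_left_distrib)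
  have scale: "coord d Vs b i (scale a u) = a * coord d Vs b i u" if i: "i \<le> d" for i a u
    by (rule coord_eqI[OF D b i]) (simp only: endo.linear_scale[OF linear_proj[OF D i]]
        proj_eq_scale_coord[OF D b i, of u] scale_scale)
  show ?thesis
    unfolding linear_iff basis_transport_def
    by (simp add: vector_space_axioms add scale scale_left_distrib sum.distrib scale_sum_right)
qed

lemma basis_transport_basis:
  assumes D: "is_decomposition scale d Vs" and b: "is_component_basis d Vs b" and k: "k \<le> d"
  shows "basis_transport d Vs b b' (b k) = b' k"
proof -
  have bk: "b k \<in> Vs k" using b k by (simp add: is_component_basis_def)
  have "coord d Vs b i (b k) = (if i = k then 1 else 0)" if i: "i \<le> d" for i
    by (rule coord_eqI[OF D b i]) (simp add: proj_component[OF D bk k i])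
  then have "basis_transport d Vs b b' (b k) = (\<Sum>i\<in>{0..d}. if i = k then b' k else 0)"
    unfolding basis_transport_def by (intro sum.cong) auto
  then show ?thesis using k by simp
qed

lemma basis_transport_comp:
  assumes D: "is_decomposition scale d Vs" and b: "is_component_basis d Vs b"
    and D': "is_decomposition scale d Vs'" and b': "is_component_basis d Vs' b'"
  shows "basis_transport d Vs' b' b \<circ> basis_transport d Vs b b' = id"
  by (rule linear_eq_on_component_basis[OF D b Vector_Spaces.linear_compose[OF
        linear_basis_transport[OF D b] linear_basis_transport[OF D' b']] linear_id])
    (simp add: basis_transport_basis[OF D b] basis_transport_basis[OF D' b'])

lemma bij_basis_transport:
  assumes "is_decomposition scale d Vs" "is_component_basis d Vs b"
    and "is_decomposition scale d Vs'" "is_component_basis d Vs' b'"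
  shows "bij (basis_transport d Vs b b')"
  using basis_transport_comp[OF assms] basis_transport_comp[OF assms(3,4,1,2)] by (rule o_bij)

definition diag_op :: "nat \<Rightarrow> (nat \<Rightarrow> 'b set) \<Rightarrow> (nat \<Rightarrow> 'a) \<Rightarrow> 'b \<Rightarrow> 'b"
  where "diag_op d Vs c v = (\<Sum>i\<in>{0..d}. scale (c i) (proj d Vs i v))"

lemma linear_diag_op:
  assumes D: "is_decomposition scale d Vs"
  shows "Vector_Spaces.linear scale scale (diag_op d Vs c)"
  unfolding diag_op_def[abs_def]
  by (intro endo.linear_compose_sum ballI endo.linear_compose_scale_right linear_proj[OF D]) simp

lemma diag_op_component:
  assumes D: "is_decomposition scale d Vs" and w: "w \<in> Vs i" and i: "i \<le> d"
  shows "diag_op d Vs c w = scale (c i) w"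
proof -
  have "diag_op d Vs c w = (\<Sum>j\<in>{0..d}. if j = i then scale (c i) w else 0)"
    unfolding diag_op_def using proj_component[OF D w i] by (intro sum.cong) auto
  then show ?thesis using i by simp
qed

lemma diag_op_inverse_comp:
  assumes D: "is_decomposition scale d Vs" and c: "\<forall>i\<le>d. c i \<noteq> 0"
  shows "diag_op d Vs (\<lambda>i. inverse (c i)) \<circ> diag_op d Vs c = id"
proof (rule linear_eq_on_decomposition[OF D _ linear_id])
  show "Vector_Spaces.linear scale scale (diag_op d Vs (\<lambda>i. inverse (c i)) \<circ> diag_op d Vs c)"
    by (rule Vector_Spaces.linear_compose[OF linear_diag_op[OF D] linear_diag_op[OF D]])
  fix i w assume i: "i \<le> d" and w: "w \<in> Vs i"
  then have "scale (c i) w \<in> Vs i" using decomposition_subspace[OF D] subspace_scale by blast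
  then show "(diag_op d Vs (\<lambda>i. inverse (c i)) \<circ> diag_op d Vs c) w = id w"
    using c i by (simp add: diag_op_component[OF D w i] diag_op_component[OF D _ i])
qed

lemma
  assumes D: "is_decomposition scale d Vs" and c: "\<forall>i\<le>d. c i \<noteq> 0"
  shows bij_diag_op: "bij (diag_op d Vs c)"
    and inv_diag_op: "inv (diag_op d Vs c) = diag_op d Vs (\<lambda>i. inverse (c i))"
proof -
  have c': "\<forall>i\<le>d. inverse (c i) \<noteq> 0" using c by simp
  have "diag_op d Vs c \<circ> diag_op d Vs (\<lambda>i. inverse (c i)) = id"
    using diag_op_inverse_comp[OF D c'] by simp
  then show "bij (diag_op d Vs c)" "inv (diag_op d Vs c) = diag_op d Vs (\<lambda>i. inverse (c i))"
    using diag_op_inverse_comp[OF D c] o_bij inv_unique_comp by blast+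
qed

lemma diag_op_conj_component:
  assumes D: "is_decomposition scale d Vs" and X: "Vector_Spaces.linear scale scale X"
    and i: "i \<le> d" and j: "j \<le> d" and w: "w \<in> Vs i" and Xw: "X w \<in> Vs j"
  shows "(diag_op d Vs c \<circ> X \<circ> diag_op d Vs c') w = scale (c j * c' i) (X w)"
proof -
  have "X (diag_op d Vs c' w) = scale (c' i) (X w)"
    using diag_op_component[OF D w i] endo.linear_scale[OF X] by simp
  moreover have "scale (c' i) (X w) \<in> Vs j"
    using Xw decomposition_subspace[OF D j] subspace_scale by blast
  ultimately show ?thesis by (simp add: diag_op_component[OF D _ j])
qed

lemma linear_diag_op_conj:
  assumes D: "is_decomposition scale d Vs" and X: "Vector_Spaces.linear scale scale X"
  shows "Vector_Spaces.linear scale scale (diag_op d Vs c \<circ> X \<circ> diag_op d Vs c')"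
  by (intro Vector_Spaces.linear_compose[OF linear_diag_op[OF D]]
      Vector_Spaces.linear_compose[OF X] linear_diag_op[OF D])

lemma diag_op_conj_image:
  assumes D: "is_decomposition scale d Vs" and X: "Vector_Spaces.linear scale scale X"
    and c: "\<forall>k\<le>d. c k \<noteq> 0" and c': "\<forall>k\<le>d. c' k \<noteq> 0"
    and i: "i \<le> d" and j: "j \<le> d" and img: "X ` Vs i = Vs j"
  shows "(diag_op d Vs c \<circ> X \<circ> diag_op d Vs c') ` Vs i = Vs j"
proof (rule image_scaled_map[OF decomposition_subspace[OF D j] _ _ img])
  show "c j * c' i \<noteq> 0" using c c' i j by simp
  show "\<forall>w\<in>Vs i. (diag_op d Vs c \<circ> X \<circ> diag_op d Vs c') w = scale (c j * c' i) (X w)"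
    using diag_op_conj_component[OF D X i j] img by blast
qed

lemma diag_op_conj_image_zero:
  assumes D: "is_decomposition scale d Vs" and X: "Vector_Spaces.linear scale scale X"
    and i: "i \<le> d" and img: "X ` Vs i = {0}"
  shows "(diag_op d Vs c \<circ> X \<circ> diag_op d Vs c') ` Vs i = {0}"
proof (rule image_scaled_map[OF subspace_single_0 _ _ img])
  show "\<forall>w\<in>Vs i. (diag_op d Vs c \<circ> X \<circ> diag_op d Vs c') w = scale 1 (X w)"
  proof
    fix w assume w: "w \<in> Vs i"
    then have Xw: "X w = 0" using img by blast
    then have "X w \<in> Vs i" using subspace_0[OF decomposition_subspace[OF D i]] by simp
    then show "(diag_op d Vs c \<circ> X \<circ> diag_op d Vs c') w = scale 1 (X w)"
      using diag_op_conj_component[OF D X i i w] Xw by simp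
  qed
qed simp

definition LR_pair_params ::
    "nat \<Rightarrow> ('b \<Rightarrow> 'b) \<Rightarrow> ('b \<Rightarrow> 'b) \<Rightarrow> (nat \<Rightarrow> 'b set) \<Rightarrow> (nat \<Rightarrow> 'a) \<Rightarrow> bool"
  where "LR_pair_params d A B Vs \<phi> \<longleftrightarrow>
    Vector_Spaces.linear scale scale A \<and> Vector_Spaces.linear scale scale B \<and>
    is_decomposition scale d Vs \<and> lowers d A Vs \<and> raises d B Vs \<and>
    (\<forall>i\<in>{1..d}. \<forall>v\<in>Vs i. B (A v) = scale (\<phi> i) v)"

lemma LR_pair_params_imp_LR_pair: "LR_pair_params d A B Vs \<phi> \<Longrightarrow> LR_pair scale d A B"
  unfolding LR_pair_params_def LR_pair_def by blast

lemma LR_pair_params_basis: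
  assumes L: "LR_pair_params d A B Vs \<phi>"
  obtains b where "is_component_basis d Vs b"
    "\<And>i. i < d \<Longrightarrow> B (b i) = b (Suc i)" "B (b d) = 0"
    "\<And>i. i \<in> {1..d} \<Longrightarrow> A (b i) = scale (\<phi> i) (b (i - 1))" "A (b 0) = 0"
proof -
  have lA: "Vector_Spaces.linear scale scale A" and lB: "Vector_Spaces.linear scale scale B"
    and D: "is_decomposition scale d Vs" and low: "lowers d A Vs" and rai: "raises d B Vs"
    and par: "\<And>i v. i \<in> {1..d} \<Longrightarrow> v \<in> Vs i \<Longrightarrow> B (A v) = scale (\<phi> i) v"
    using L by (auto simp: LR_pair_params_def)
  obtain e where e: "e \<in> Vs 0" "e \<noteq> 0"
    using decomposition_component_nonzero[OF D, of 0] by blast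
  define b where "b i = (B ^^ i) e" for i
  have b_Suc: "B (b i) = b (Suc i)" for i by (simp add: b_def)
  have basis: "b i \<in> Vs i \<and> b i \<noteq> 0" if "i \<le> d" for i
    using that
  proof (induction i)
    case 0
    then show ?case using e by (simp add: b_def)
  next
    case (Suc i)
    then have bi: "b i \<in> Vs i" "b i \<noteq> 0" and "i < d" by auto
    then have img: "B ` Vs i = Vs (Suc i)" using rai by (simp add: raises_def)
    have "B (b i) \<in> Vs (Suc i)" using img bi(1) by blast
    moreover have "B (b i) \<noteq> 0" using component_map_nonzero[OF D lB _ Suc.prems img bi] \<open>i < d\<close> by simp
    ultimately show ?case by (simp add: b_Suc)
  qed
  have "B ` Vs d = {0}" using rai by (simp add: raises_def)
  then have B_top: "B (b d) = 0" using basis[of d] by blast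
  have "A ` Vs 0 = {0}" using low by (simp add: lowers_def)
  then have A_bottom: "A (b 0) = 0" using basis[of 0] by blast
  have A_basis: "A (b i) = scale (\<phi> i) (b (i - 1))" if i: "i \<in> {1..d}" for i
  proof -
    obtain k where k: "i = Suc k" "k < d" using i by (cases i) auto
    have bi: "b i \<in> Vs i" "b i \<noteq> 0" and bk: "b k \<in> Vs k" "b k \<noteq> 0"
      using basis k by auto
    have "A ` Vs i = Vs k" using low i k by (simp add: lowers_def)
    then have "A (b i) \<in> Vs k" using bi by blast
    then obtain s where s: "A (b i) = scale s (b k)"
      using decomposition_component_multiple[OF D _ bk] \<open>k < d\<close> by (meson less_imp_le)
    have "scale (\<phi> i) (b i) = B (A (b i))" using par[OF i bi(1)] by simp
    also have "\<dots> = scale s (B (b k))" using s endo.linear_scale[OF lB] by simp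
    also have "\<dots> = scale s (b i)" using b_Suc k(1) by simp
    finally have "\<phi> i = s" using bi(2) by simp
    then show ?thesis using s k(1) by simp
  qed
  have "is_component_basis d Vs b" using basis by (simp add: is_component_basis_def)
  then show ?thesis by (rule that[OF _ b_Suc B_top A_basis A_bottom])
qed

lemma LR_pair_params_nonzero:
  assumes L: "LR_pair_params d A B Vs \<phi>" and i: "i \<in> {1..d}"
  shows "\<phi> i \<noteq> 0"
proof -
  have D: "is_decomposition scale d Vs" and lA: "Vector_Spaces.linear scale scale A"
    and img: "A ` Vs i = Vs (i - 1)"
    using L i by (auto simp: LR_pair_params_def lowers_def)
  obtain b where b: "is_component_basis d Vs b"
    and A_b: "A (b i) = scale (\<phi> i) (b (i - 1))"
    using LR_pair_params_basis[OF L] i by metis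
  have "b i \<in> Vs i" "b i \<noteq> 0" "i \<le> d" "i - 1 \<le> d"
    using b i by (auto simp: is_component_basis_def)
  then have "A (b i) \<noteq> 0" using component_map_nonzero[OF D lA _ _ img] by blast
  then show ?thesis using A_b by auto
qed

lemma LR_pair_params_isomorphic:
  assumes L: "LR_pair_params d X Y Ws \<phi>" and L': "LR_pair_params d X' Y' Ws' \<phi>"
  shows "\<exists>\<sigma>. Vector_Spaces.linear scale scale \<sigma> \<and> bij \<sigma> \<and>
    \<sigma> \<circ> X = X' \<circ> \<sigma> \<and> \<sigma> \<circ> Y = Y' \<circ> \<sigma>"
proof -
  have lX: "Vector_Spaces.linear scale scale X" and lY: "Vector_Spaces.linear scale scale Y"
    and D: "is_decomposition scale d Ws" using L by (auto simp: LR_pair_params_def)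
  have lX': "Vector_Spaces.linear scale scale X'" and lY': "Vector_Spaces.linear scale scale Y'"
    and D': "is_decomposition scale d Ws'" using L' by (auto simp: LR_pair_params_def)
  obtain b where b: "is_component_basis d Ws b"
    and Y_b: "\<And>i. i < d \<Longrightarrow> Y (b i) = b (Suc i)" "Y (b d) = 0"
    and X_b: "\<And>i. i \<in> {1..d} \<Longrightarrow> X (b i) = scale (\<phi> i) (b (i - 1))" "X (b 0) = 0"
    using LR_pair_params_basis[OF L] by blast
  obtain b' where b': "is_component_basis d Ws' b'"
    and Y'_b': "\<And>i. i < d \<Longrightarrow> Y' (b' i) = b' (Suc i)" "Y' (b' d) = 0"
    and X'_b': "\<And>i. i \<in> {1..d} \<Longrightarrow> X' (b' i) = scale (\<phi> i) (b' (i - 1))" "X' (b' 0) = 0"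
    using LR_pair_params_basis[OF L'] by blast
  define \<sigma> where "\<sigma> = basis_transport d Ws b b'"
  have l\<sigma>: "Vector_Spaces.linear scale scale \<sigma>"
    unfolding \<sigma>_def by (rule linear_basis_transport[OF D b])
  have \<sigma>_b: "\<sigma> (b k) = b' k" if "k \<le> d" for k
    unfolding \<sigma>_def by (rule basis_transport_basis[OF D b that])
  have "bij \<sigma>" unfolding \<sigma>_def by (rule bij_basis_transport[OF D b D' b'])
  moreover have "\<sigma> \<circ> X = X' \<circ> \<sigma>"
  proof (rule linear_eq_on_component_basis[OF D b Vector_Spaces.linear_compose[OF lX l\<sigma>]
        Vector_Spaces.linear_compose[OF l\<sigma> lX']])
    fix i assume "i \<le> d"
    then consider "i = 0" | "i \<in> {1..d}" by fastforce
    then show "(\<sigma> \<circ> X) (b i) = (X' \<circ> \<sigma>) (b i)"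
    proof cases
      case 1
      then show ?thesis by (simp add: X_b X'_b' \<sigma>_b endo.linear_0[OF l\<sigma>])
    next
      case 2
      then have "i - 1 \<le> d" "i \<le> d" by auto
      then show ?thesis
        using 2 by (simp add: X_b X'_b' \<sigma>_b endo.linear_scale[OF l\<sigma>])
    qed
  qed
  moreover have "\<sigma> \<circ> Y = Y' \<circ> \<sigma>"
  proof (rule linear_eq_on_component_basis[OF D b Vector_Spaces.linear_compose[OF lY l\<sigma>]
        Vector_Spaces.linear_compose[OF l\<sigma> lY']])
    fix i assume "i \<le> d"
    then consider "i = d" | "i < d" by fastforce
    then show "(\<sigma> \<circ> Y) (b i) = (Y' \<circ> \<sigma>) (b i)"
    proof cases
      case 1
      then show ?thesis by (simp add: Y_b Y'_b' \<sigma>_b endo.linear_0[OF l\<sigma>])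
    next
      case 2
      then show ?thesis by (simp add: Y_b Y'_b' \<sigma>_b)
    qed
  qed
  ultimately show ?thesis using l\<sigma> by blast
qed

lemma LR_pair_params_imp_LR_iso:
  "LR_pair_params d X Y Ws \<phi> \<Longrightarrow> LR_pair_params d X' Y' Ws' \<phi> \<Longrightarrow> LR_iso scale d X Y X' Y'"
  unfolding LR_iso_def
  using LR_pair_params_imp_LR_pair LR_pair_params_isomorphic by blast

lemma LR_pair_params_swap:
  assumes L: "LR_pair_params d A B Vs \<phi>"
  shows "LR_pair_params d B A (\<lambda>i. Vs (d - i)) (\<lambda>i. \<phi> (d + 1 - i))"
proof -
  have lA: "Vector_Spaces.linear scale scale A" and lB: "Vector_Spaces.linear scale scale B"
    and D: "is_decomposition scale d Vs" and low: "lowers d A Vs" and rai: "raises d B Vs"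
    and par: "\<And>i v. i \<in> {1..d} \<Longrightarrow> v \<in> Vs i \<Longrightarrow> B (A v) = scale (\<phi> i) v"
    using L by (auto simp: LR_pair_params_def)
  have "lowers d B (\<lambda>i. Vs (d - i))"
    using rai unfolding raises_def lowers_def by (auto simp: Suc_diff_le)
  moreover have "raises d A (\<lambda>i. Vs (d - i))"
    using low unfolding raises_def lowers_def by auto
  moreover have "A (B v) = scale (\<phi> (d + 1 - i)) v" if i: "i \<in> {1..d}" and v: "v \<in> Vs (d - i)" for i v
  proof -
    have j: "d + 1 - i \<in> {1..d}" using i by auto
    then have "A ` Vs (d + 1 - i) = Vs (d - i)" using low i by (simp add: lowers_def)
    then obtain w where w: "w \<in> Vs (d + 1 - i)" "v = A w" using v by force
    have "A (B v) = A (scale (\<phi> (d + 1 - i)) w)" using par[OF j w(1)] w(2) by simp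
    also have "\<dots> = scale (\<phi> (d + 1 - i)) v" using w(2) endo.linear_scale[OF lA] by simp
    finally show ?thesis .
  qed
  ultimately show ?thesis
    using lA lB is_decomposition_reverse[OF D] unfolding LR_pair_params_def by blast
qed

lemma LR_pair_params_conj_raising:
  assumes L: "LR_pair_params d A B Vs \<phi>" and c: "\<forall>i\<le>d. c i \<noteq> 0"
    and \<psi>: "\<And>i. i \<in> {1..d} \<Longrightarrow> c (i - 1) / c i * \<phi> i = \<psi> i"
  shows "LR_pair_params d A (diag_op d Vs (\<lambda>i. inverse (c i)) \<circ> B \<circ> diag_op d Vs c) Vs \<psi>"
proof -
  let ?B = "diag_op d Vs (\<lambda>i. inverse (c i)) \<circ> B \<circ> diag_op d Vs c"
  have lA: "Vector_Spaces.linear scale scale A" and lB: "Vector_Spaces.linear scale scale B"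
    and D: "is_decomposition scale d Vs" and low: "lowers d A Vs" and rai: "raises d B Vs"
    and par: "\<And>i v. i \<in> {1..d} \<Longrightarrow> v \<in> Vs i \<Longrightarrow> B (A v) = scale (\<phi> i) v"
    using L by (auto simp: LR_pair_params_def)
  have c_inv: "\<forall>k\<le>d. inverse (c k) \<noteq> 0" using c by simp
  have "raises d ?B Vs"
    using rai diag_op_conj_image[OF D lB c_inv c] diag_op_conj_image_zero[OF D lB]
    unfolding raises_def by simp
  moreover have "?B (A v) = scale (\<psi> i) v" if i: "i \<in> {1..d}" and v: "v \<in> Vs i" for i v
  proof -
    have i_le: "i - 1 \<le> d" "i \<le> d" using i by auto
    have "A ` Vs i = Vs (i - 1)" using low i by (simp add: lowers_def)
    then have Av: "A v \<in> Vs (i - 1)" using v by blast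
    have "B (A v) \<in> Vs i"
      using par[OF i v] v decomposition_subspace[OF D] subspace_scale i by auto
    then have "?B (A v) = scale (inverse (c i) * c (i - 1)) (B (A v))"
      by (rule diag_op_conj_component[OF D lB i_le Av])
    then show ?thesis using par[OF i v] \<psi>[OF i] by (simp add: divide_inverse ac_simps)
  qed
  ultimately show ?thesis
    using lA D low linear_diag_op_conj[OF D lB] unfolding LR_pair_params_def by blast
qed

lemma LR_pair_params_conj_lowering:
  assumes L: "LR_pair_params d A B Vs \<phi>" and c: "\<forall>i\<le>d. c i \<noteq> 0"
    and \<psi>: "\<And>i. i \<in> {1..d} \<Longrightarrow> c (i - 1) / c i * \<phi> i = \<psi> i"
  shows "LR_pair_params d (diag_op d Vs c \<circ> A \<circ> diag_op d Vs (\<lambda>i. inverse (c i))) B Vs \<psi>"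
proof -
  let ?A = "diag_op d Vs c \<circ> A \<circ> diag_op d Vs (\<lambda>i. inverse (c i))"
  have lA: "Vector_Spaces.linear scale scale A" and lB: "Vector_Spaces.linear scale scale B"
    and D: "is_decomposition scale d Vs" and low: "lowers d A Vs" and rai: "raises d B Vs"
    and par: "\<And>i v. i \<in> {1..d} \<Longrightarrow> v \<in> Vs i \<Longrightarrow> B (A v) = scale (\<phi> i) v"
    using L by (auto simp: LR_pair_params_def)
  have c_inv: "\<forall>k\<le>d. inverse (c k) \<noteq> 0" using c by simp
  have "lowers d ?A Vs"
    unfolding lowers_def
  proof (intro conjI ballI)
    fix i assume i: "i \<in> {1..d}"
    then have "i \<le> d" "i - 1 \<le> d" by auto
    then show "?A ` Vs i = Vs (i - 1)"
      using diag_op_conj_image[OF D lA c c_inv] low i by (simp add: lowers_def)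
  next
    show "?A ` Vs 0 = {0}" using diag_op_conj_image_zero[OF D lA] low by (simp add: lowers_def)
  qed
  moreover have "B (?A v) = scale (\<psi> i) v" if i: "i \<in> {1..d}" and v: "v \<in> Vs i" for i v
  proof -
    have i_le: "i \<le> d" "i - 1 \<le> d" using i by auto
    have "A ` Vs i = Vs (i - 1)" using low i by (simp add: lowers_def)
    then have "A v \<in> Vs (i - 1)" using v by blast
    then have "?A v = scale (c (i - 1) * inverse (c i)) (A v)"
      by (rule diag_op_conj_component[OF D lA i_le v])
    then show ?thesis
      using par[OF i v] \<psi>[OF i] endo.linear_scale[OF lB] by (simp add: divide_inverse)
  qed
  ultimately show ?thesis
    using lB D rai linear_diag_op_conj[OF D lA] unfolding LR_pair_params_def by blast
qed

end

theorem proposition7p19: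
  fixes scale :: "'a::field \<Rightarrow> 'v::ab_group_add \<Rightarrow> 'v"
    and d :: nat and A B :: "'v \<Rightarrow> 'v" and Vs :: "nat \<Rightarrow> 'v set" and \<phi> :: "nat \<Rightarrow> 'a"
  assumes "vector_space scale"
    and "Vector_Spaces.linear scale scale A" and "Vector_Spaces.linear scale scale B"
    and "is_decomposition scale d Vs" and "lowers d A Vs" and "raises d B Vs"
    and "\<forall>i\<in>{1..d}. \<forall>v\<in>Vs i. B (A v) = scale (\<phi> i) v"
  defines "\<Psi> \<equiv> (\<lambda>v. \<Sum>i\<in>{0..d}.
      scale ((\<Prod>j\<in>{1..i}. \<phi> j) / (\<Prod>j\<in>{1..i}. \<phi> (d + 1 - j))) (proj d Vs i v))"
  shows "bij \<Psi>
    \<and> LR_pair scale d A (inv \<Psi> \<circ> B \<circ> \<Psi>)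
    \<and> LR_pair scale d B A
    \<and> LR_pair scale d (\<Psi> \<circ> A \<circ> inv \<Psi>) B
    \<and> LR_iso scale d A (inv \<Psi> \<circ> B \<circ> \<Psi>) B A
    \<and> LR_iso scale d B A (\<Psi> \<circ> A \<circ> inv \<Psi>) B
    \<and> LR_iso scale d A (inv \<Psi> \<circ> B \<circ> \<Psi>) (\<Psi> \<circ> A \<circ> inv \<Psi>) B"
proof -
  interpret vector_space scale by fact
  let ?c = "psi_coeff d \<phi>" and ?\<psi> = "\<lambda>i. \<phi> (d + 1 - i)"
  have \<Psi>: "\<Psi> = diag_op d Vs ?c"
    unfolding \<Psi>_def diag_op_def psi_coeff_def ..
  have L: "LR_pair_params d A B Vs \<phi>"
    using assms(2-7) unfolding LR_pair_params_def by blast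
  then have \<phi>: "\<forall>j\<in>{1..d}. \<phi> j \<noteq> 0" using LR_pair_params_nonzero by blast
  then have c: "\<forall>i\<le>d. ?c i \<noteq> 0" using psi_coeff_nonzero by blast
  have ratio: "\<And>i. i \<in> {1..d} \<Longrightarrow> ?c (i - 1) / ?c i * \<phi> i = ?\<psi> i"
    using psi_coeff_ratio[OF \<phi>] by blast
  have inv: "inv \<Psi> = diag_op d Vs (\<lambda>i. inverse (?c i))"
    unfolding \<Psi> using inv_diag_op[OF assms(4) c] .
  have L1: "LR_pair_params d A (inv \<Psi> \<circ> B \<circ> \<Psi>) Vs ?\<psi>"
    unfolding inv unfolding \<Psi> by (rule LR_pair_params_conj_raising[OF L c ratio])
  have L2: "LR_pair_params d B A (\<lambda>i. Vs (d - i)) ?\<psi>"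
    by (rule LR_pair_params_swap[OF L])
  have L3: "LR_pair_params d (\<Psi> \<circ> A \<circ> inv \<Psi>) B Vs ?\<psi>"
    unfolding inv unfolding \<Psi> by (rule LR_pair_params_conj_lowering[OF L c ratio])
  show ?thesis
    using bij_diag_op[OF assms(4) c] L1 L2 L3 unfolding \<Psi>[symmetric]
    by (blast intro: LR_pair_params_imp_LR_pair LR_pair_params_imp_LR_iso)
qed

end
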